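(* Fix $m\ge1$, write $x=t_m$, and let $x\mapsto H(x)$ be an integral curve of $X_m$ in $\mathcal H$. Define the differential Faà di Bruno basis $\{F^{(j)}\}_{j\in\mathbb Z}$ at each $x$ by $F^{(a)}=H^{(a)}$ for $a=0,\dots,m-1$ and $F^{(j+m)}=(\partial_x+H^{(m)})F^{(j)}$ for all $j\in\mathbb Z$ (for $j<0$, $F^{(j)}$ is the unique Laurent series in $z$ with $x$-dependent coefficients satisfying this relation; $F^{(j)}=z^j+$lower order). Let $\widetilde{\mathcal H}_+$ be the span of $\{F^{(j)}\}_{j\ge0}$ and $\widetilde{\mathcal H}_-$ the space of (possibly infinite) combinations of $\{F^{(j)}\}_{j<0}$, with coefficients functions of $x$, and let $\tilde\pi_\pm$ be the projections of $\mathcal L=\widetilde{\mathcal H}_+\oplus\widetilde{\mathcal H}_-$. Then $H^{(j)}(x)=\tilde\pi_+(z^j)$ for all $j\ge0$, and the flows induced by the $X_j$ on the orbit space $\mathcal Q_m$ (coordinatized by $(H^{(1)}(x),\dots,H^{(m)}(x))$) are $$\frac{\partial H^{(a)}}{\partial t_j}=-\tilde\pi_-\big(H^{(a)}\,\tilde\pi_+(z^j)\big),\qquad a=1,\dots,m,\ j\ge1 .$$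
   Context: Let $z$ be a formal variable and $\mathcal L$ the space of formal Laurent series $\sum_{j\le N} l_j z^j$ (finitely many positive powers of $z$), here with coefficients functions of $x$. Let $\mathcal H$ be the set of sequences $H=(H^{(k)})_{k\ge0}$ with $H^{(0)}=1$ and, for $k\ge1$, $H^{(k)}=z^k+\sum_{l\ge1}H^k_l z^{-l}$; set $H^0_l=0$. The central system (CS) is the family of commuting vector fields $X_j$, $j\ge1$, on $\mathcal H$, with times $t_j$, defined by $$\frac{\partial H^{(k)}}{\partial t_j}=H^{(j+k)}-H^{(j)}H^{(k)}+\sum_{l=1}^{k}H^j_lH^{(k-l)}+\sum_{l=1}^{j}H^k_lH^{(j-l)},\qquad k\ge0.$$ $\mathcal Q_m$ is the space of integral curves (orbits) of $X_m$; an integral curve is determined by its first $m$ currents $H^{(1)}(x),\dots,H^{(m)}(x)$, and since the $X_j$ commute with $X_m$ they induce flows on $\mathcal Q_m$. *)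

theory Defs
  imports "HOL-Analysis.Analysis"
begin

text \<open>Formal Laurent series in z with coefficients that are real functions of x.
  A series s is represented by its coefficient map: s n is the coefficient of z^n.\<close>

type_synonym lser = "int \<Rightarrow> real \<Rightarrow> real"

definition laurent :: "lser \<Rightarrow> bool" where
  "laurent s \<longleftrightarrow> (\<exists>N. \<forall>n>N. s n = (\<lambda>x. 0))"

definition ladd :: "lser \<Rightarrow> lser \<Rightarrow> lser" where
  "ladd a b = (\<lambda>n x. a n x + b n x)"

definition lsub :: "lser \<Rightarrow> lser \<Rightarrow> lser" where
  "lsub a b = (\<lambda>n x. a n x - b n x)"

definition lneg :: "lser \<Rightarrow> lser" where
  "lneg a = (\<lambda>n x. - a n x)"

definition lscal :: "(real \<Rightarrow> real) \<Rightarrow> lser \<Rightarrow> lser" where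
  "lscal c a = (\<lambda>n x. c x * a n x)"

text \<open>Product of Laurent series: for series bounded above the index set is finite.\<close>
definition lmul :: "lser \<Rightarrow> lser \<Rightarrow> lser" where
  "lmul a b = (\<lambda>n x. \<Sum>i\<in>{i. a i \<noteq> (\<lambda>x. 0) \<and> b (n - i) \<noteq> (\<lambda>x. 0)}. a i x * b (n - i) x)"

definition lD :: "lser \<Rightarrow> lser" where
  "lD s = (\<lambda>n. deriv (s n))"

definition zpow :: "int \<Rightarrow> lser" where
  "zpow j = (\<lambda>n x. if n = j then 1 else 0)"

text \<open>A point of \<open>\<H>\<close> with x-dependent coefficients: Hc k l = H^k_l (for k, l \<ge> 1).
  Hser Hc k is the series H^(k) = z^k + sum_{l\<ge>1} H^k_l z^(-l), and H^(0) = 1.\<close>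
definition Hser :: "(nat \<Rightarrow> nat \<Rightarrow> real \<Rightarrow> real) \<Rightarrow> nat \<Rightarrow> lser" where
  "Hser Hc k = (\<lambda>n x. (if n = int k then 1 else 0)
                     + (if n < 0 \<and> k > 0 then Hc k (nat (- n)) x else 0))"

text \<open>Right-hand side of the central system for dH^(k)/dt_j.\<close>
definition csrhs :: "(nat \<Rightarrow> nat \<Rightarrow> real \<Rightarrow> real) \<Rightarrow> nat \<Rightarrow> nat \<Rightarrow> lser" where
  "csrhs Hc j k =
     ladd (ladd (lsub (Hser Hc (j + k)) (lmul (Hser Hc j) (Hser Hc k)))
                (\<lambda>n x. \<Sum>l\<in>{1..k}. Hc j l x * Hser Hc (k - l) n x))
          (\<lambda>n x. \<Sum>l\<in>{1..j}. Hc k l x * Hser Hc (j - l) n x)"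

text \<open>x \<mapsto> H(x) is an integral curve of X_m (x = t_m).\<close>
definition integral_curve :: "nat \<Rightarrow> (nat \<Rightarrow> nat \<Rightarrow> real \<Rightarrow> real) \<Rightarrow> bool" where
  "integral_curve m Hc \<longleftrightarrow>
     (\<forall>k l x. 1 \<le> k \<longrightarrow> 1 \<le> l \<longrightarrow>
        (Hc k l has_real_derivative csrhs Hc m k (- int l) x) (at x))"

definition FdB :: "nat \<Rightarrow> (nat \<Rightarrow> nat \<Rightarrow> real \<Rightarrow> real) \<Rightarrow> (int \<Rightarrow> lser) \<Rightarrow> bool" where
  "FdB m Hc F \<longleftrightarrow>
     (\<forall>j. laurent (F j)) \<and>
     (\<forall>a<m. F (int a) = Hser Hc a) \<and>
     (\<forall>j. F (j + int m) = ladd (lD (F j)) (lmul (Hser Hc m) (F j)))"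

definition Hplus :: "(int \<Rightarrow> lser) \<Rightarrow> lser \<Rightarrow> bool" where
  "Hplus F g \<longleftrightarrow> (\<exists>c :: int \<Rightarrow> real \<Rightarrow> real. \<exists>N::int.
      g = (\<lambda>n x. \<Sum>j\<in>{0..N}. c j x * F j n x))"

text \<open>\<open>\<tilde>\<H>_-\<close>: possibly infinite combinations of F^(j), j < 0.  Since F^(j) = z^j + lower
  order, the coefficient of z^n only involves the finitely many j with n \<le> j \<le> -1.\<close>
definition Hminus :: "(int \<Rightarrow> lser) \<Rightarrow> lser \<Rightarrow> bool" where
  "Hminus F g \<longleftrightarrow> (\<exists>c :: int \<Rightarrow> real \<Rightarrow> real.
      g = (\<lambda>n x. \<Sum>j\<in>{n..-1}. c j x * F j n x))"

definition piplus :: "(int \<Rightarrow> lser) \<Rightarrow> lser \<Rightarrow> lser" where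
  "piplus F f = (THE g. Hplus F g \<and> Hminus F (lsub f g))"

definition piminus :: "(int \<Rightarrow> lser) \<Rightarrow> lser \<Rightarrow> lser" where
  "piminus F f = lsub f (piplus F f)"

end

theory Submission
  imports Defs
begin

(* The operator d/dx + H^(m) raises the z-degree of a Laurent series by exactly m and is
   unitriangular: the coefficient of z^(n+m) in its image is the coefficient of z^n plus terms
   involving only higher coefficients. Such an operator is a bijection of Laurent series, so the
   Faa di Bruno basis is its unique orbit through H^(0), ..., H^(m-1), and F^(j) = z^j + lower
   order. This triangularity splits L into the two spans, pi_+ f being the unique element of the
   span of the F^(j), j >= 0, with the same nonnegative coefficients as f.
   The central system with j = m reads
     (d/dx + H^(m)) H^(i) = H^(m+i) + sum_l H^m_l H^(i-l) + sum_l H^i_l H^(m-l),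
   so by induction every H^(k) lies in that span, i.e. H^(k) = pi_+(z^k). For arbitrary j, a >= 1
   the central system writes H^(a) H^(j) as an element of the span minus dH^(a)/dt_j, which has
   only negative powers of z; hence dH^(a)/dt_j = - pi_-(H^(a) pi_+(z^j)). *)

definition deg_le :: "lser \<Rightarrow> int \<Rightarrow> bool" where
  "deg_le s d \<longleftrightarrow> (\<forall>n>d. s n = (\<lambda>x. 0))"

lemma deg_leD: "deg_le s d \<Longrightarrow> d < n \<Longrightarrow> s n x = 0"
  unfolding deg_le_def by simp

lemma deg_le_mono: "deg_le s d \<Longrightarrow> d \<le> d' \<Longrightarrow> deg_le s d'"
  unfolding deg_le_def by simp

lemma laurent_iff_deg_le: "laurent s \<longleftrightarrow> (\<exists>d. deg_le s d)"
  unfolding laurent_def deg_le_def ..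

lemma laurent_zero: "laurent (\<lambda>n x. 0)"
  unfolding laurent_iff_deg_le deg_le_def by simp

lemma deg_le_Hser: "deg_le (Hser Hc k) (int k)"
  unfolding deg_le_def Hser_def by (intro allI impI ext) simp

lemma laurent_Hser: "laurent (Hser Hc k)"
  using deg_le_Hser laurent_iff_deg_le by blast

lemma laurent_zpow: "laurent (zpow j)"
  unfolding laurent_iff_deg_le deg_le_def zpow_def by (auto intro: exI[of _ j])

lemma Hser_nonneg: "0 \<le> n \<Longrightarrow> Hser Hc k n x = (if n = int k then 1 else 0)"
  by (simp add: Hser_def)

lemma lmul_eq_sum:
  assumes "deg_le a d" "deg_le b e"
  shows "lmul a b n x = (\<Sum>i\<in>{n-e..d}. a i x * b (n-i) x)"
  unfolding lmul_def
proof (rule sum.mono_neutral_left)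
  show "{i. a i \<noteq> (\<lambda>x. 0) \<and> b (n - i) \<noteq> (\<lambda>x. 0)} \<subseteq> {n-e..d}"
  proof
    fix i assume "i \<in> {i. a i \<noteq> (\<lambda>x. 0) \<and> b (n - i) \<noteq> (\<lambda>x. 0)}"
    then have "\<not> d < i" "\<not> e < n - i" using assms unfolding deg_le_def by auto
    then show "i \<in> {n-e..d}" by simp
  qed
qed auto

lemma lmul_commute:
  assumes "laurent a" "laurent b"
  shows "lmul a b = lmul b a"
proof (intro ext)
  fix n x
  obtain d e where d: "deg_le a d" and e: "deg_le b e"
    using assms laurent_iff_deg_le by blast
  have "lmul a b n x = (\<Sum>i\<in>{n-e..d}. a i x * b (n-i) x)" by (rule lmul_eq_sum[OF d e])
  also have "\<dots> = (\<Sum>i\<in>{n-d..e}. b i x * a (n-i) x)"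
    by (rule sum.reindex_bij_witness[of _ "\<lambda>i. n - i" "\<lambda>i. n - i"]) auto
  also have "\<dots> = lmul b a n x" by (rule lmul_eq_sum[OF e d, symmetric])
  finally show "lmul a b n x = lmul b a n x" .
qed

lemma deg_le_lmul:
  assumes "deg_le a d" "deg_le b e"
  shows "deg_le (lmul a b) (d + e)"
  unfolding deg_le_def
proof (intro allI impI ext)
  fix n x assume "d + e < n"
  then show "lmul a b n x = 0" unfolding lmul_eq_sum[OF assms] by simp
qed

section \<open>Unitriangular operators shifting the degree\<close>

definition shift_unitriangular :: "int \<Rightarrow> (lser \<Rightarrow> lser) \<Rightarrow> bool" where
  "shift_unitriangular m T \<longleftrightarrow> T (\<lambda>n x. 0) = (\<lambda>n x. 0) \<and>
     (\<forall>G1 G2 n x. laurent G1 \<longrightarrow> laurent G2 \<longrightarrow> (\<forall>q>n. G1 q = G2 q) \<longrightarrow>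
        T G1 (n + m) x - G1 n x = T G2 (n + m) x - G2 n x)"

lemma shift_unitriangularD:
  assumes "shift_unitriangular m T" "laurent G1" "laurent G2" "\<And>q. n < q \<Longrightarrow> G1 q = G2 q"
  shows "T G1 (n + m) x - G1 n x = T G2 (n + m) x - G2 n x"
  using assms unfolding shift_unitriangular_def by blast

lemma shift_unitriangular_top_coeff:
  assumes T: "shift_unitriangular m T" and G: "deg_le G d"
  shows "T G (d + m) = G d"
proof
  fix x
  have "laurent G" using G laurent_iff_deg_le by blast
  moreover have "\<And>q. d < q \<Longrightarrow> G q = (\<lambda>x. 0)" using G unfolding deg_le_def by blast
  ultimately have "T G (d + m) x - G d x = T (\<lambda>n x. 0) (d + m) x - 0"
    using shift_unitriangularD[OF T _ laurent_zero] by fastforce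
  then show "T G (d + m) x = G d x" using T unfolding shift_unitriangular_def by simp
qed

lemma shift_unitriangular_deg_le:
  assumes T: "shift_unitriangular m T" and G: "deg_le G d"
  shows "deg_le (T G) (d + m)"
  unfolding deg_le_def
proof (intro allI impI)
  fix p assume p: "d + m < p"
  have "deg_le G (p - m)" using G p deg_le_mono by simp
  then have "T G (p - m + m) = G (p - m)" by (rule shift_unitriangular_top_coeff[OF T])
  also have "\<dots> = (\<lambda>x. 0)" using G p unfolding deg_le_def by simp
  finally show "T G p = (\<lambda>x. 0)" by simp
qed

lemma deg_le_step:
  assumes "deg_le s d" "s d = (\<lambda>x. 0)"
  shows "deg_le s (d - 1)"
  unfolding deg_le_def
proof (intro allI impI)
  fix n assume "d - 1 < n"
  then consider "n = d" | "d < n" by linarith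
  then show "s n = (\<lambda>x. 0)" using assms unfolding deg_le_def by cases auto
qed

lemma shift_unitriangular_deg_le_rev:
  assumes T: "shift_unitriangular m T" and G: "laurent G" and TG: "deg_le (T G) (d + m)"
  shows "deg_le G d"
proof -
  obtain e where e: "deg_le G e" using G laurent_iff_deg_le by blast
  have "d \<le> i \<longrightarrow> deg_le G i" if "i \<le> max d e" for i
    using that
  proof (induction rule: int_le_induct)
    case base
    show ?case using deg_le_mono[OF e] by simp
  next
    case (step i)
    show ?case
    proof
      assume "d \<le> i - 1"
      then have Gi: "deg_le G i" using step.IH by simp
      have "G i = T G (i + m)" using shift_unitriangular_top_coeff[OF T Gi] ..
      also have "\<dots> = (\<lambda>x. 0)" using TG \<open>d \<le> i - 1\<close> unfolding deg_le_def by simp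
      finally show "deg_le G (i - 1)" by (rule deg_le_step[OF Gi])
    qed
  qed
  then show ?thesis by simp
qed

lemma shift_unitriangular_inj:
  assumes T: "shift_unitriangular m T" and G1: "laurent G1" and G2: "laurent G2"
    and eq: "T G1 = T G2"
  shows "G1 = G2"
proof -
  obtain e1 e2 where e1: "deg_le G1 e1" and e2: "deg_le G2 e2"
    using G1 G2 laurent_iff_deg_le by blast
  have agree: "\<forall>q>i. G1 q = G2 q" if "i \<le> max e1 e2" for i
    using that
  proof (induction rule: int_le_induct)
    case base
    show ?case using e1 e2 unfolding deg_le_def by simp
  next
    case (step i)
    have "G1 i = G2 i"
    proof
      fix x
      show "G1 i x = G2 i x"
        using shift_unitriangularD[OF T G1 G2, of i x] step.IH eq by simp
    qed
    show ?case
    proof (intro allI impI)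
      fix q assume "i - 1 < q"
      then consider "q = i" | "i < q" by linarith
      then show "G1 q = G2 q" using step.IH \<open>G1 i = G2 i\<close> by cases auto
    qed
  qed
  show ?thesis
  proof
    fix n
    show "G1 n = G2 n" using agree[of "min (n - 1) (max e1 e2)"] by simp
  qed
qed

(* Step k fixes the coefficient of z^(d-k), solving T G = R from the top down. *)
primrec back_subst :: "int \<Rightarrow> (lser \<Rightarrow> lser) \<Rightarrow> lser \<Rightarrow> int \<Rightarrow> nat \<Rightarrow> lser" where
  "back_subst m T R d 0 = (\<lambda>n x. 0)"
| "back_subst m T R d (Suc k) = (back_subst m T R d k)(d - int k :=
     (\<lambda>x. R (d - int k + m) x - T (back_subst m T R d k) (d - int k + m) x))"

lemma back_subst_support:
  assumes "d < q \<or> q \<le> d - int k"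
  shows "back_subst m T R d k q = (\<lambda>x. 0)"
  using assms by (induction k) auto

lemma back_subst_stable:
  assumes "k \<le> k'" "d - int k < q"
  shows "back_subst m T R d k' q = back_subst m T R d k q"
  using assms(1)
proof (induction k' rule: dec_induct)
  case (step k')
  then show ?case using assms(2) by simp
qed simp

lemma shift_unitriangular_surj:
  assumes T: "shift_unitriangular m T" and R: "laurent R"
  shows "\<exists>G. laurent G \<and> T G = R"
proof -
  obtain d where d: "deg_le R (d + m)"
    using R laurent_iff_deg_le by (metis diff_add_cancel)
  let ?A = "back_subst m T R d"
  define G where "G q = ?A (nat (d - q + 1)) q" for q
  have G_A: "G q = ?A k q" if "d - int k < q" for k q
    unfolding G_def using that by (intro back_subst_stable[symmetric]) auto
  have laurent_A: "laurent (?A k)" for k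
    unfolding laurent_iff_deg_le deg_le_def using back_subst_support by blast
  have G_deg: "deg_le G d"
    unfolding deg_le_def using G_A[of 0] back_subst_support by simp
  have laurent_G: "laurent G" using G_deg laurent_iff_deg_le by blast
  have TG: "T G (n + m) x = R (n + m) x" for n x
  proof (cases "d < n")
    case True
    then show ?thesis
      using deg_leD[OF shift_unitriangular_deg_le[OF T G_deg]] deg_leD[OF d] by simp
  next
    case False
    define k where "k = nat (d - n)"
    have n: "n = d - int k" using False unfolding k_def by simp
    have "T G (n + m) x - G n x = T (?A k) (n + m) x - ?A k n x"
      by (rule shift_unitriangularD[OF T laurent_G laurent_A]) (simp add: G_A n)
    moreover have "?A k n x = 0" using back_subst_support n by simp
    moreover have "G n x = R (n + m) x - T (?A k) (n + m) x"
      using G_A[of "Suc k" n] n by simp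
    ultimately show ?thesis by simp
  qed
  have "T G = R"
  proof (intro ext)
    fix p x
    show "T G p x = R p x" using TG[of "p - m" x] by simp
  qed
  then show ?thesis using laurent_G by blast
qed

lemma bij_betw_shift_unitriangular:
  assumes T: "shift_unitriangular m T"
  shows "bij_betw T {G. laurent G} {G. laurent G}"
  unfolding bij_betw_def
proof
  show "inj_on T {G. laurent G}"
    using shift_unitriangular_inj[OF T] by (auto intro: inj_onI)
  show "T ` {G. laurent G} = {G. laurent G}"
  proof
    show "T ` {G. laurent G} \<subseteq> {G. laurent G}"
      using shift_unitriangular_deg_le[OF T] by (auto simp: laurent_iff_deg_le)
    show "{G. laurent G} \<subseteq> T ` {G. laurent G}"
      using shift_unitriangular_surj[OF T] by auto
  qed
qed

section \<open>Orbits of a bijection\<close>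

lemma residue_class_induct:
  fixes m :: nat and j :: int
  assumes m: "0 < m"
    and low: "\<And>a. a < m \<Longrightarrow> P (int a)"
    and up: "\<And>j. P j \<Longrightarrow> P (j + int m)"
    and down: "\<And>j. P (j + int m) \<Longrightarrow> P j"
  shows "P j"
proof -
  define r where "r = nat (j mod int m)"
  have r: "r < m" "int r = j mod int m"
    using m unfolding r_def by (simp_all add: nat_less_iff)
  have "P (int r + q * int m)" for q
  proof (induction q rule: int_induct[where k = 0])
    case base
    show ?case using low[OF r(1)] by simp
  next
    case (step1 i)
    then show ?case using up[of "int r + i * int m"] by (simp add: algebra_simps)
  next
    case (step2 i)
    then show ?case using down[of "int r + (i - 1) * int m"] by (simp add: algebra_simps)
  qed
  from this[of "j div int m"] show ?thesis
    unfolding r(2) by (simp add: mod_div_mult_eq)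
qed

lemma nat_residue_class_induct:
  fixes m j :: nat
  assumes m: "0 < m"
    and low: "\<And>a. a < m \<Longrightarrow> P a"
    and up: "\<And>j. P j \<Longrightarrow> P (j + m)"
  shows "P j"
proof -
  have "P (j mod m + q * m)" for q
  proof (induction q)
    case 0
    show ?case using low[of "j mod m"] m by simp
  next
    case (Suc q)
    then show ?case using up[of "j mod m + q * m"] by (simp add: algebra_simps)
  qed
  from this[of "j div m"] show ?thesis by (simp add: mod_div_mult_eq)
qed

lemma bij_betw_orbit_ex1:
  fixes T :: "'a \<Rightarrow> 'a" and h :: "nat \<Rightarrow> 'a"
  assumes T: "bij_betw T S S" and m: "0 < m" and h: "\<And>a. a < m \<Longrightarrow> h a \<in> S"
  shows "\<exists>!F. (\<forall>j. F j \<in> S) \<and> (\<forall>a<m. F (int a) = h a) \<and> (\<forall>j. F (j + int m) = T (F j))"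
proof
  let ?T' = "inv_into S T"
  define iter where "iter q = (if 0 \<le> q then T ^^ nat q else ?T' ^^ nat (- q))" for q :: int
  have T': "bij_betw ?T' S S" using bij_betw_inv_into[OF T] .
  have iter_in: "iter q y \<in> S" if "y \<in> S" for q y
    unfolding iter_def
    using bij_betw_apply[OF bij_betw_funpow[OF T] that] bij_betw_apply[OF bij_betw_funpow[OF T'] that]
    by simp
  have iter_succ: "iter (q + 1) y = T (iter q y)" if y: "y \<in> S" for q y
  proof (cases "0 \<le> q")
    case True
    then have "nat (q + 1) = Suc (nat q)" by simp
    then show ?thesis unfolding iter_def using True by simp
  next
    case False
    define k where "k = nat (- q - 1)"
    have "nat (- q) = Suc k" using False unfolding k_def by simp
    then have "T (iter q y) = (?T' ^^ k) y"
      unfolding iter_def using False bij_betw_inv_into_right[OF T]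
        bij_betw_apply[OF bij_betw_funpow[OF T'] y] by simp
    moreover have "iter (q + 1) y = (?T' ^^ k) y"
      unfolding iter_def k_def using False by (cases "q = -1") auto
    ultimately show ?thesis by simp
  qed
  define F where "F j = iter (j div int m) (h (nat (j mod int m)))" for j
  have h_res: "h (nat (j mod int m)) \<in> S" for j
    using m by (intro h) (simp add: nat_less_iff)
  have "\<forall>j. F j \<in> S" unfolding F_def using iter_in[OF h_res] by blast
  moreover have "\<forall>a<m. F (int a) = h a" unfolding F_def iter_def by simp
  moreover have "\<forall>j. F (j + int m) = T (F j)" unfolding F_def using iter_succ[OF h_res] m by simp
  ultimately show "(\<forall>j. F j \<in> S) \<and> (\<forall>a<m. F (int a) = h a) \<and> (\<forall>j. F (j + int m) = T (F j))"
    by blast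
  fix F'
  assume F': "(\<forall>j. F' j \<in> S) \<and> (\<forall>a<m. F' (int a) = h a) \<and> (\<forall>j. F' (j + int m) = T (F' j))"
  show "F' = F"
  proof
    fix j
    show "F' j = F j"
    proof (induction j rule: residue_class_induct[OF m])
      case (1 a)
      then show ?case using F' \<open>\<forall>a<m. F (int a) = h a\<close> by simp
    next
      case (2 j)
      then show ?case using F' \<open>\<forall>j. F (j + int m) = T (F j)\<close> by simp
    next
      case (3 j)
      then have "T (F' j) = T (F j)" using F' \<open>\<forall>j. F (j + int m) = T (F j)\<close> by simp
      then show ?case
        using F' \<open>\<forall>j. F j \<in> S\<close> bij_betw_imp_inj_on[OF T] by (auto dest: inj_onD)
    qed
  qed
qed

section \<open>Monic bases and the splitting of Laurent series\<close>

definition monic_basis :: "(int \<Rightarrow> lser) \<Rightarrow> bool" where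
  "monic_basis F \<longleftrightarrow> (\<forall>j. deg_le (F j) j \<and> F j j = (\<lambda>x. 1))"

function minus_coeffs :: "(int \<Rightarrow> lser) \<Rightarrow> lser \<Rightarrow> int \<Rightarrow> real \<Rightarrow> real" where
  "minus_coeffs F g n = (\<lambda>x. g n x - (\<Sum>j\<in>{n<..-1}. minus_coeffs F g j x * F j n x))"
  by auto
termination
  by (relation "Wellfounded.measure (\<lambda>(F, g, n). nat (- n))") auto

declare minus_coeffs.simps [simp del]

lemma Hminus_iff:
  assumes F: "monic_basis F"
  shows "Hminus F g \<longleftrightarrow> (\<forall>n\<ge>0. g n = (\<lambda>x. 0))"
proof
  assume "Hminus F g"
  then show "\<forall>n\<ge>0. g n = (\<lambda>x. 0)" unfolding Hminus_def by auto
next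
  assume g: "\<forall>n\<ge>0. g n = (\<lambda>x. 0)"
  have "g n x = (\<Sum>j\<in>{n..-1}. minus_coeffs F g j x * F j n x)" for n x
  proof (cases "n < 0")
    case True
    then have "{n..-1} = insert n {n<..-1}" by auto
    then show ?thesis
      using F by (simp add: minus_coeffs.simps[of F g n] monic_basis_def)
  qed (use g in simp)
  then show "Hminus F g" unfolding Hminus_def by blast
qed

definition fun_subalgebra :: "(real \<Rightarrow> real) set \<Rightarrow> bool" where
  "fun_subalgebra C \<longleftrightarrow> (\<forall>c. (\<lambda>x. c) \<in> C) \<and>
     (\<forall>a\<in>C. \<forall>b\<in>C. (\<lambda>x. a x + b x) \<in> C \<and> (\<lambda>x. a x * b x) \<in> C)"

definition plus_span :: "(real \<Rightarrow> real) set \<Rightarrow> (int \<Rightarrow> lser) \<Rightarrow> lser set" where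
  "plus_span C F = {(\<lambda>n x. \<Sum>j\<in>{0..N}. c j x * F j n x) | c N. \<forall>j. c j \<in> C}"

lemma fun_subalgebra_const: "fun_subalgebra C \<Longrightarrow> (\<lambda>x. c) \<in> C"
  unfolding fun_subalgebra_def by blast

lemma fun_subalgebra_add: "fun_subalgebra C \<Longrightarrow> a \<in> C \<Longrightarrow> b \<in> C \<Longrightarrow> (\<lambda>x. a x + b x) \<in> C"
  unfolding fun_subalgebra_def by blast

lemma fun_subalgebra_mult: "fun_subalgebra C \<Longrightarrow> a \<in> C \<Longrightarrow> b \<in> C \<Longrightarrow> (\<lambda>x. a x * b x) \<in> C"
  unfolding fun_subalgebra_def by blast

lemma fun_subalgebra_sum:
  assumes C: "fun_subalgebra C" and f: "\<And>i. i \<in> S \<Longrightarrow> f i \<in> C"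
  shows "(\<lambda>x. \<Sum>i\<in>S. f i x) \<in> C"
  using f
proof (induction S rule: infinite_finite_induct)
  case (insert i S)
  then show ?case using C unfolding fun_subalgebra_def by simp
qed (use C in \<open>simp_all add: fun_subalgebra_def\<close>)

lemma fun_subalgebra_diff:
  assumes C: "fun_subalgebra C" and "f \<in> C" "g \<in> C"
  shows "(\<lambda>x. f x - g x) \<in> C"
proof -
  from fun_subalgebra_mult[OF C fun_subalgebra_const[OF C, of "-1"] assms(3)]
  have "(\<lambda>x. - 1 * g x) \<in> C" by simp
  from fun_subalgebra_add[OF C assms(2) this] show ?thesis by simp
qed

lemma fun_subalgebra_UNIV: "fun_subalgebra UNIV"
  unfolding fun_subalgebra_def by simp

lemma Hplus_iff_plus_span: "Hplus F g \<longleftrightarrow> g \<in> plus_span UNIV F"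
  unfolding Hplus_def plus_span_def by blast

lemma plus_spanI: "(\<forall>j. c j \<in> C) \<Longrightarrow> (\<lambda>n x. \<Sum>j\<in>{0..N}. c j x * F j n x) \<in> plus_span C F"
  unfolding plus_span_def by blast

lemma plus_spanE:
  assumes "g \<in> plus_span C F"
  obtains c N where "\<forall>j. c j \<in> C" "g = (\<lambda>n x. \<Sum>j\<in>{0..N}. c j x * F j n x)"
  using assms unfolding plus_span_def by blast

lemma plus_span_pad:
  assumes C: "fun_subalgebra C" and g: "g \<in> plus_span C F"
  obtains N0 where
    "\<And>N. N0 \<le> N \<Longrightarrow> \<exists>c. (\<forall>j. c j \<in> C) \<and> g = (\<lambda>n x. \<Sum>j\<in>{0..N}. c j x * F j n x)"
proof -
  obtain c N0 where c: "\<forall>j. c j \<in> C" and g: "g = (\<lambda>n x. \<Sum>j\<in>{0..N0}. c j x * F j n x)"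
    using g by (rule plus_spanE)
  have "\<exists>c. (\<forall>j. c j \<in> C) \<and> g = (\<lambda>n x. \<Sum>j\<in>{0..N}. c j x * F j n x)" if "N0 \<le> N" for N
  proof (intro exI conjI)
    let ?c = "\<lambda>j. if j \<le> N0 then c j else (\<lambda>x. 0)"
    show "\<forall>j. ?c j \<in> C" using c C unfolding fun_subalgebra_def by simp
    show "g = (\<lambda>n x. \<Sum>j\<in>{0..N}. ?c j x * F j n x)"
      unfolding g using that by (intro ext sum.mono_neutral_cong_left) auto
  qed
  then show ?thesis by (rule that)
qed

lemma plus_span_add:
  assumes C: "fun_subalgebra C" and g1: "g1 \<in> plus_span C F" and g2: "g2 \<in> plus_span C F"
  shows "(\<lambda>n x. g1 n x + g2 n x) \<in> plus_span C F"
proof -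
  obtain N1 where N1: "\<And>N. N1 \<le> N \<Longrightarrow>
      \<exists>c. (\<forall>j. c j \<in> C) \<and> g1 = (\<lambda>n x. \<Sum>j\<in>{0..N}. c j x * F j n x)"
    using plus_span_pad[OF C g1] by blast
  obtain N2 where N2: "\<And>N. N2 \<le> N \<Longrightarrow>
      \<exists>c. (\<forall>j. c j \<in> C) \<and> g2 = (\<lambda>n x. \<Sum>j\<in>{0..N}. c j x * F j n x)"
    using plus_span_pad[OF C g2] by blast
  obtain c1 c2 where c1: "\<forall>j. c1 j \<in> C" "g1 = (\<lambda>n x. \<Sum>j\<in>{0..max N1 N2}. c1 j x * F j n x)"
    and c2: "\<forall>j. c2 j \<in> C" "g2 = (\<lambda>n x. \<Sum>j\<in>{0..max N1 N2}. c2 j x * F j n x)"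
    using N1[of "max N1 N2"] N2[of "max N1 N2"] by auto
  have "(\<lambda>n x. g1 n x + g2 n x) =
      (\<lambda>n x. \<Sum>j\<in>{0..max N1 N2}. (c1 j x + c2 j x) * F j n x)"
    unfolding c1(2) c2(2) by (simp add: sum.distrib distrib_right)
  also have "\<dots> \<in> plus_span C F"
    using c1(1) c2(1) C unfolding fun_subalgebra_def by (intro plus_spanI) simp
  finally show ?thesis .
qed

lemma plus_span_scale:
  assumes C: "fun_subalgebra C" and a: "a \<in> C" and g: "g \<in> plus_span C F"
  shows "(\<lambda>n x. a x * g n x) \<in> plus_span C F"
proof -
  obtain c N where c: "\<forall>j. c j \<in> C" and g: "g = (\<lambda>n x. \<Sum>j\<in>{0..N}. c j x * F j n x)"
    using g by (rule plus_spanE)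
  have "(\<lambda>n x. a x * g n x) = (\<lambda>n x. \<Sum>j\<in>{0..N}. (a x * c j x) * F j n x)"
    unfolding g by (simp add: sum_distrib_left mult.assoc)
  also have "\<dots> \<in> plus_span C F"
    using a c C unfolding fun_subalgebra_def by (intro plus_spanI) simp
  finally show ?thesis .
qed

lemma plus_span_diff:
  assumes C: "fun_subalgebra C" and g1: "g1 \<in> plus_span C F" and g2: "g2 \<in> plus_span C F"
  shows "(\<lambda>n x. g1 n x - g2 n x) \<in> plus_span C F"
proof -
  have "(\<lambda>x. -1) \<in> C" using C unfolding fun_subalgebra_def by blast
  from plus_span_add[OF C g1 plus_span_scale[OF C this g2]]
  have "(\<lambda>n x. g1 n x + (- 1) * g2 n x) \<in> plus_span C F" by simp
  then show ?thesis by simp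
qed

lemma plus_span_zero:
  assumes "fun_subalgebra C"
  shows "(\<lambda>n x. 0) \<in> plus_span C F"
  using plus_spanI[where c = "\<lambda>j x. 0" and C = C and N = 0 and F = F] assms
  unfolding fun_subalgebra_def by simp

lemma plus_span_sum:
  assumes C: "fun_subalgebra C" and "finite S" and "\<And>s. s \<in> S \<Longrightarrow> g s \<in> plus_span C F"
  shows "(\<lambda>n x. \<Sum>s\<in>S. g s n x) \<in> plus_span C F"
  using assms(2,3)
proof (induction S rule: finite_induct)
  case empty
  show ?case using plus_span_zero[OF C] by simp
next
  case (insert s S)
  then show ?case using plus_span_add[OF C, of "g s" F "\<lambda>n x. \<Sum>s\<in>S. g s n x"] by simp
qed

lemma plus_span_basis:
  assumes C: "fun_subalgebra C" and j: "0 \<le> j"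
  shows "F j \<in> plus_span C F"
proof -
  have "(\<Sum>i\<in>{0..j}. (if i = j then 1 else 0) * F i n x) = F j n x" for n x
  proof -
    have "(\<Sum>i\<in>{0..j}. (if i = j then 1 else 0) * F i n x) =
        (\<Sum>i\<in>{0..j}. if i = j then F j n x else 0)"
      by (rule sum.cong) auto
    then show ?thesis using j by simp
  qed
  then have "F j = (\<lambda>n x. \<Sum>i\<in>{0..j}. (if i = j then 1 else 0) * F i n x)" by simp
  also have "\<dots> \<in> plus_span C F"
    using C unfolding fun_subalgebra_def by (intro plus_spanI) simp
  finally show ?thesis .
qed

lemma plus_span_mono: "C \<subseteq> C' \<Longrightarrow> plus_span C F \<subseteq> plus_span C' F"
  unfolding plus_span_def by blast

lemma plus_span_eq_zeroI:
  assumes F: "monic_basis F" and g: "g \<in> plus_span C F" and g0: "\<forall>n\<ge>0. g n = (\<lambda>x. 0)"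
  shows "g = (\<lambda>n x. 0)"
proof -
  obtain c N where g: "g = (\<lambda>n x. \<Sum>j\<in>{0..N}. c j x * F j n x)"
    using g by (rule plus_spanE)
  have c0: "c j x = 0" if j: "j \<in> {0..N}" for j x
  proof (rule ccontr)
    assume "c j x \<noteq> 0"
    let ?J = "{i\<in>{0..N}. c i x \<noteq> 0}"
    let ?M = "Max ?J"
    have fin: "finite ?J" by (rule finite_subset[of _ "{0..N}"]) auto
    have ne: "?J \<noteq> {}" using j \<open>c j x \<noteq> 0\<close> by auto
    have M: "?M \<in> ?J" using Max_in[OF fin ne] .
    have "g ?M x = (\<Sum>i\<in>{0..N}. if i = ?M then c ?M x else 0)"
      unfolding g
    proof (intro sum.cong refl)
      fix i assume i: "i \<in> {0..N}"
      consider "i = ?M" | "i < ?M" | "?M < i" by linarith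
      then show "c i x * F i ?M x = (if i = ?M then c ?M x else 0)"
      proof cases
        case 2
        have "deg_le (F i) i" using F unfolding monic_basis_def by blast
        then have "F i ?M x = 0" using 2 by (rule deg_leD)
        then show ?thesis using 2 by simp
      next
        case 3
        then have "c i x = 0" using Max_ge[OF fin, of i] i by fastforce
        then show ?thesis using 3 by simp
      qed (use F in \<open>simp add: monic_basis_def\<close>)
    qed
    also have "\<dots> = c ?M x" using M by simp
    finally show False using g0 M by simp
  qed
  show ?thesis unfolding g using c0 by (intro ext sum.neutral) simp
qed

lemma ex_plus_span_eq_nonneg:
  assumes F: "monic_basis F" and f: "laurent f"
  shows "\<exists>g\<in>plus_span UNIV F. \<forall>n\<ge>0. g n = f n"
proof -
  obtain d where "deg_le f d" using f laurent_iff_deg_le by blast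
  then have f: "deg_le f (max d (-1))" by (rule deg_le_mono) simp
  have "\<forall>f. deg_le f d \<longrightarrow> (\<exists>g\<in>plus_span UNIV F. \<forall>n\<ge>0. g n = f n)" if "-1 \<le> d" for d
    using that
  proof (induction d rule: int_ge_induct)
    case base
    show ?case
    proof (intro allI impI)
      fix f assume "deg_le f (- 1)"
      show "\<exists>g\<in>plus_span UNIV F. \<forall>n\<ge>0. g n = f n"
      proof (rule bexI[of _ "\<lambda>n x. 0"])
        show "\<forall>n\<ge>0. (\<lambda>n x. 0) n = f n" using \<open>deg_le f (- 1)\<close> by (simp add: deg_le_def)
      qed (rule plus_span_zero[OF fun_subalgebra_UNIV])
    qed
  next
    case (step d)
    show ?case
    proof (intro allI impI)
      fix f assume f: "deg_le f (d + 1)"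
      define f' where "f' n x = f n x - f (d + 1) x * F (d + 1) n x" for n x
      have "deg_le f' d"
        unfolding deg_le_def
      proof (intro allI impI ext)
        fix n x assume "d < n"
        have F_top: "deg_le (F (d + 1)) (d + 1)" "F (d + 1) (d + 1) = (\<lambda>x. 1)"
          using F unfolding monic_basis_def by blast+
        consider "n = d + 1" | "d + 1 < n" using \<open>d < n\<close> by linarith
        then show "f' n x = 0"
          unfolding f'_def by cases (simp_all add: F_top(2) deg_leD[OF f] deg_leD[OF F_top(1)])
      qed
      then obtain g' where g': "g' \<in> plus_span UNIV F" "\<forall>n\<ge>0. g' n = f' n"
        using step.IH by auto
      define g where "g n x = g' n x + f (d + 1) x * F (d + 1) n x" for n x
      have "F (d + 1) \<in> plus_span UNIV F"
        using step.hyps by (intro plus_span_basis[OF fun_subalgebra_UNIV]) simp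
      then have "(\<lambda>n x. f (d + 1) x * F (d + 1) n x) \<in> plus_span UNIV F"
        by (rule plus_span_scale[OF fun_subalgebra_UNIV UNIV_I])
      from plus_span_add[OF fun_subalgebra_UNIV g'(1) this] have "g \<in> plus_span UNIV F"
        unfolding g_def[abs_def] .
      moreover have "\<forall>n\<ge>0. g n = f n"
        using g'(2) by (auto simp: g_def f'_def)
      ultimately show "\<exists>g\<in>plus_span UNIV F. \<forall>n\<ge>0. g n = f n" by blast
    qed
  qed
  from this[of "max d (-1)"] f show ?thesis by (simp only: max.cobounded2 simp_thms)
qed

lemma Hminus_lsub_iff:
  assumes "monic_basis F"
  shows "Hminus F (lsub f g) \<longleftrightarrow> (\<forall>n\<ge>0. g n = f n)"
  unfolding Hminus_iff[OF assms] lsub_def fun_eq_iff by simp metis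

lemma decomposition_ex1:
  assumes F: "monic_basis F" and f: "laurent f"
  shows "\<exists>!g. Hplus F g \<and> Hminus F (lsub f g)"
  unfolding Hplus_iff_plus_span Hminus_lsub_iff[OF F]
proof (rule ex_ex1I)
  show "\<exists>g. g \<in> plus_span UNIV F \<and> (\<forall>n\<ge>0. g n = f n)" using ex_plus_span_eq_nonneg[OF F f] by blast
next
  fix g1 g2
  assume g1: "g1 \<in> plus_span UNIV F \<and> (\<forall>n\<ge>0. g1 n = f n)"
    and g2: "g2 \<in> plus_span UNIV F \<and> (\<forall>n\<ge>0. g2 n = f n)"
  have "(\<lambda>n x. g1 n x - g2 n x) \<in> plus_span UNIV F"
    using g1 g2 by (simp add: plus_span_diff[OF fun_subalgebra_UNIV])
  moreover have "\<forall>n\<ge>0. (\<lambda>n x. g1 n x - g2 n x) n = (\<lambda>x. 0)" using g1 g2 by simp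
  ultimately have "(\<lambda>n x. g1 n x - g2 n x) = (\<lambda>n x. 0)" by (rule plus_span_eq_zeroI[OF F])
  then show "g1 = g2" by (simp add: fun_eq_iff)
qed

lemma piplus_eqI:
  assumes F: "monic_basis F" and f: "laurent f"
    and g: "Hplus F g" and gf: "\<forall>n\<ge>0. g n = f n"
  shows "piplus F f = g"
  unfolding piplus_def
  by (rule the1_equality[OF decomposition_ex1[OF F f]]) (simp add: g gf Hminus_lsub_iff[OF F])

section \<open>The operator d/dx + H^(m) and the Faa di Bruno basis\<close>

definition dx_plus_H :: "nat \<Rightarrow> (nat \<Rightarrow> nat \<Rightarrow> real \<Rightarrow> real) \<Rightarrow> lser \<Rightarrow> lser" where
  "dx_plus_H m Hc G = ladd (lD G) (lmul (Hser Hc m) G)"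

lemma lmul_Hser_left:
  assumes m: "1 \<le> m" and G: "deg_le G e"
  shows "lmul (Hser Hc m) G n x =
    G (n - int m) x + (\<Sum>i\<in>{n-e..-1}. Hc m (nat (-i)) x * G (n-i) x)"
proof -
  have "lmul (Hser Hc m) G n x = (\<Sum>i\<in>{n-e..int m}. Hser Hc m i x * G (n-i) x)"
    by (rule lmul_eq_sum[OF deg_le_Hser G])
  also have "\<dots> = (\<Sum>i\<in>{n-e..int m}. if i = int m then G (n - int m) x else 0)
      + (\<Sum>i\<in>{n-e..int m}. if i < 0 then Hc m (nat (-i)) x * G (n-i) x else 0)"
    unfolding sum.distrib[symmetric] using m by (intro sum.cong) (auto simp: Hser_def)
  also have "(\<Sum>i\<in>{n-e..int m}. if i = int m then G (n - int m) x else 0) = G (n - int m) x"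
    using deg_leD[OF G, of "n - int m"] by auto
  also have "(\<Sum>i\<in>{n-e..int m}. if i < 0 then Hc m (nat (-i)) x * G (n-i) x else 0)
      = (\<Sum>i\<in>{i\<in>{n-e..int m}. i < 0}. Hc m (nat (-i)) x * G (n-i) x)"
    by (rule sum.inter_filter[symmetric]) simp
  also have "{i\<in>{n-e..int m}. i < 0} = {n-e..-1}" by auto
  finally show ?thesis .
qed

lemma dx_plus_H_coeff:
  assumes m: "1 \<le> m" and G: "deg_le G e"
  shows "dx_plus_H m Hc G (n + int m) x = G n x + deriv (G (n + int m)) x
     + (\<Sum>i\<in>{n + int m - e..-1}. Hc m (nat (-i)) x * G (n + int m - i) x)"
  unfolding dx_plus_H_def ladd_def lD_def lmul_Hser_left[OF assms] by simp

lemma shift_unitriangular_dx_plus_H: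
  assumes m: "1 \<le> m"
  shows "shift_unitriangular (int m) (dx_plus_H m Hc)"
  unfolding shift_unitriangular_def
proof (intro conjI allI impI)
  show "dx_plus_H m Hc (\<lambda>n x. 0) = (\<lambda>n x. 0)"
    unfolding dx_plus_H_def ladd_def lD_def lmul_def by simp
next
  fix G1 G2 n x
  assume G1: "laurent G1" and G2: "laurent G2" and eq: "\<forall>q>n. G1 q = G2 q"
  obtain e where e1: "deg_le G1 e" and e2: "deg_le G2 e"
    using G1 G2 deg_le_mono unfolding laurent_iff_deg_le by (metis max.cobounded1 max.cobounded2)
  have "(\<Sum>i\<in>{n + int m - e..-1}. Hc m (nat (-i)) x * G1 (n + int m - i) x)
      = (\<Sum>i\<in>{n + int m - e..-1}. Hc m (nat (-i)) x * G2 (n + int m - i) x)"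
    using eq m by (intro sum.cong) auto
  moreover have "G1 (n + int m) = G2 (n + int m)" using eq m by simp
  ultimately show "dx_plus_H m Hc G1 (n + int m) x - G1 n x
      = dx_plus_H m Hc G2 (n + int m) x - G2 n x"
    unfolding dx_plus_H_coeff[OF m e1] dx_plus_H_coeff[OF m e2] by simp
qed

lemma FdB_ex1:
  assumes m: "1 \<le> m"
  shows "\<exists>!F. FdB m Hc F"
proof -
  have "\<exists>!F. (\<forall>j. F j \<in> {G. laurent G}) \<and> (\<forall>a<m. F (int a) = Hser Hc a)
      \<and> (\<forall>j. F (j + int m) = dx_plus_H m Hc (F j))"
    using m laurent_Hser
    by (intro bij_betw_orbit_ex1 bij_betw_shift_unitriangular[OF shift_unitriangular_dx_plus_H]) auto
  then show ?thesis unfolding FdB_def dx_plus_H_def by simp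
qed

lemma FdB_monic_basis:
  assumes m: "1 \<le> m" and F: "FdB m Hc F"
  shows "monic_basis F"
  unfolding monic_basis_def
proof
  fix j
  have T: "shift_unitriangular (int m) (dx_plus_H m Hc)" by (rule shift_unitriangular_dx_plus_H[OF m])
  have rec: "F (j + int m) = dx_plus_H m Hc (F j)" and laurent: "laurent (F j)" for j
    using F unfolding FdB_def dx_plus_H_def by simp_all
  show "deg_le (F j) j \<and> F j j = (\<lambda>x. 1)"
  proof (induction j rule: residue_class_induct[of m])
    case 1
    show ?case using m by simp
  next
    case (2 a)
    then show ?case using F deg_le_Hser unfolding FdB_def by (simp add: Hser_def)
  next
    case (3 j)
    then show ?case
      using shift_unitriangular_deg_le[OF T] shift_unitriangular_top_coeff[OF T] rec by simp
  next
    case (4 j)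
    then have deg: "deg_le (F j) j"
      using shift_unitriangular_deg_le_rev[OF T laurent] rec by simp
    have "F j j = F (j + int m) (j + int m)"
      using shift_unitriangular_top_coeff[OF T deg] rec by simp
    then show ?case using deg 4 by simp
  qed
qed

section \<open>The differential ring of the currents\<close>

(* Along an integral curve this ring is closed under d/dx, which lets d/dx + H^(m) act on spans
   with coefficients in it; arbitrary coefficient functions need not even be differentiable. *)
inductive_set Hpoly :: "(nat \<Rightarrow> nat \<Rightarrow> real \<Rightarrow> real) \<Rightarrow> (real \<Rightarrow> real) set" for Hc where
  const: "(\<lambda>x. c) \<in> Hpoly Hc"
| coeff: "1 \<le> k \<Longrightarrow> 1 \<le> l \<Longrightarrow> Hc k l \<in> Hpoly Hc"
| add: "f \<in> Hpoly Hc \<Longrightarrow> g \<in> Hpoly Hc \<Longrightarrow> (\<lambda>x. f x + g x) \<in> Hpoly Hc"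
| mult: "f \<in> Hpoly Hc \<Longrightarrow> g \<in> Hpoly Hc \<Longrightarrow> (\<lambda>x. f x * g x) \<in> Hpoly Hc"

lemma fun_subalgebra_Hpoly: "fun_subalgebra (Hpoly Hc)"
  unfolding fun_subalgebra_def by (blast intro: Hpoly.intros)

lemma Hser_coeff_Hpoly: "Hser Hc k n \<in> Hpoly Hc"
proof (cases "n < 0 \<and> 0 < k")
  case True
  then have "Hser Hc k n = Hc k (nat (- n))" unfolding Hser_def by (intro ext) simp
  moreover have "Hc k (nat (- n)) \<in> Hpoly Hc" using True by (intro Hpoly.coeff) auto
  ultimately show ?thesis by simp
next
  case False
  then have "Hser Hc k n = (\<lambda>x. if n = int k then 1 else 0)" unfolding Hser_def by auto
  then show ?thesis by (simp add: Hpoly.const)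
qed

lemma lmul_coeff_Hpoly:
  assumes "\<And>i. a i \<in> Hpoly Hc" "\<And>i. b i \<in> Hpoly Hc"
  shows "lmul a b n \<in> Hpoly Hc"
  unfolding lmul_def
  using assms by (intro fun_subalgebra_sum[OF fun_subalgebra_Hpoly] Hpoly.mult)

lemma csrhs_coeff_Hpoly:
  assumes "1 \<le> j" "1 \<le> k"
  shows "csrhs Hc j k n \<in> Hpoly Hc"
proof -
  note sum = fun_subalgebra_sum[OF fun_subalgebra_Hpoly]
  have "(\<lambda>x. Hser Hc (j + k) n x - lmul (Hser Hc j) (Hser Hc k) n x
      + (\<Sum>l\<in>{1..k}. Hc j l x * Hser Hc (k - l) n x)
      + (\<Sum>l\<in>{1..j}. Hc k l x * Hser Hc (j - l) n x)) \<in> Hpoly Hc"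
    using assms
    by (intro Hpoly.add fun_subalgebra_diff[OF fun_subalgebra_Hpoly] sum Hpoly.mult
        Hpoly.coeff Hser_coeff_Hpoly lmul_coeff_Hpoly) auto
  then show ?thesis unfolding csrhs_def ladd_def lsub_def by simp
qed

lemma Hpoly_deriv:
  assumes m: "1 \<le> m" and curve: "integral_curve m Hc" and f: "f \<in> Hpoly Hc"
  shows "deriv f \<in> Hpoly Hc \<and> (\<forall>x. (f has_real_derivative deriv f x) (at x))"
  using f
proof induction
  case (const c)
  then show ?case by (simp add: Hpoly.const)
next
  case (coeff k l)
  have d: "(Hc k l has_real_derivative csrhs Hc m k (- int l) x) (at x)" for x
    using curve coeff unfolding integral_curve_def by blast
  then have "deriv (Hc k l) = csrhs Hc m k (- int l)"
    by (intro ext DERIV_imp_deriv)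
  then show ?case using d csrhs_coeff_Hpoly[OF m coeff(1)] by simp
next
  case (add f g)
  have d: "((\<lambda>x. f x + g x) has_real_derivative deriv f x + deriv g x) (at x)" for x
    using add by (auto intro!: derivative_eq_intros)
  then have "deriv (\<lambda>x. f x + g x) = (\<lambda>x. deriv f x + deriv g x)"
    by (intro ext DERIV_imp_deriv)
  then show ?case using d add by (simp add: Hpoly.add)
next
  case (mult f g)
  have d: "((\<lambda>x. f x * g x) has_real_derivative deriv f x * g x + f x * deriv g x) (at x)" for x
    using mult by (auto intro!: derivative_eq_intros)
  then have "deriv (\<lambda>x. f x * g x) = (\<lambda>x. deriv f x * g x + f x * deriv g x)"
    by (intro ext DERIV_imp_deriv)
  then show ?case using d mult by (simp add: Hpoly.add Hpoly.mult)
qed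

section \<open>Projections of the currents\<close>

lemma lmul_Hser_Hser_nonneg:
  assumes "1 \<le> j" "1 \<le> k" "0 \<le> n"
  shows "lmul (Hser Hc j) (Hser Hc k) n x =
    (if n = int j + int k then 1 else 0) + (if n < int j then Hc k (nat (int j - n)) x else 0)
    + (if n < int k then Hc j (nat (int k - n)) x else 0)"
proof -
  have "lmul (Hser Hc j) (Hser Hc k) n x
      = (\<Sum>i\<in>{n - int k..int j}. Hser Hc j i x * Hser Hc k (n - i) x)"
    by (rule lmul_eq_sum[OF deg_le_Hser deg_le_Hser])
  also have "\<dots> = (\<Sum>i\<in>{n - int k..int j}.
     (if i = int j then (if n - i = int k then 1 else 0)
        + (if n - i < 0 then Hc k (nat (i - n)) x else 0) else 0)
     + (if i = n - int k then (if i < 0 then Hc j (nat (- i)) x else 0) else 0))"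
    using assms by (intro sum.cong) (auto simp: Hser_def)
  also have "\<dots> = (if n = int j + int k then 1 else 0) + (if n < int j then Hc k (nat (int j - n)) x else 0)
      + (if n < int k then Hc j (nat (int k - n)) x else 0)"
    unfolding sum.distrib by (cases "n - int k \<le> int j") (use assms in auto)
  finally show ?thesis .
qed

lemma sum_Hc_Hser_nonneg:
  assumes "0 \<le> n"
  shows "(\<Sum>l\<in>{1..k}. Hc j l x * Hser Hc (k - l) n x)
    = (if n < int k then Hc j (nat (int k - n)) x else 0)"
proof -
  have "(\<Sum>l\<in>{1..k}. Hc j l x * Hser Hc (k - l) n x)
      = (\<Sum>l\<in>{1..k}. if l = nat (int k - n) then Hc j l x else 0)"
    using assms by (intro sum.cong) (auto simp: Hser_nonneg)
  then show ?thesis using assms by auto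
qed

lemma csrhs_nonneg:
  assumes "1 \<le> j" "1 \<le> k" "0 \<le> n"
  shows "csrhs Hc j k n = (\<lambda>x. 0)"
proof
  fix x
  show "csrhs Hc j k n x = 0"
    unfolding csrhs_def ladd_def lsub_def sum_Hc_Hser_nonneg[OF assms(3)]
      lmul_Hser_Hser_nonneg[OF assms]
    using assms by (auto simp: Hser_nonneg)
qed

lemma lD_Hser:
  assumes m: "1 \<le> m" and curve: "integral_curve m Hc" and i: "1 \<le> i"
  shows "lD (Hser Hc i) = csrhs Hc m i"
proof
  fix n
  show "lD (Hser Hc i) n = csrhs Hc m i n"
  proof (cases "n < 0")
    case True
    have e: "Hser Hc i n = Hc i (nat (- n))" unfolding Hser_def using True i by (intro ext) simp
    have "(Hc i (nat (- n)) has_real_derivative csrhs Hc m i n x) (at x)" for x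
      using curve[unfolded integral_curve_def, rule_format, of i "nat (- n)"] i True by simp
    then have "deriv (Hc i (nat (- n))) = csrhs Hc m i n"
      by (intro ext DERIV_imp_deriv)
    then show ?thesis unfolding lD_def e .
  next
    case False
    have e: "Hser Hc i n = (\<lambda>x. if n = int i then 1 else 0)"
      unfolding Hser_def using False by (intro ext) simp
    show ?thesis unfolding lD_def e using csrhs_nonneg[OF m i, of n Hc] False by simp
  qed
qed

lemma dx_plus_H_Hser:
  assumes m: "1 \<le> m" and curve: "integral_curve m Hc" and i: "1 \<le> i"
  shows "dx_plus_H m Hc (Hser Hc i) = (\<lambda>n x. Hser Hc (m + i) n x
     + (\<Sum>l\<in>{1..i}. Hc m l x * Hser Hc (i - l) n x) + (\<Sum>l\<in>{1..m}. Hc i l x * Hser Hc (m - l) n x))"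
  unfolding dx_plus_H_def ladd_def lD_Hser[OF assms] csrhs_def lsub_def
  by (simp add: lmul_commute[OF laurent_Hser laurent_Hser, of Hc m Hc i] add.assoc)

lemma dx_plus_H_Hser_0:
  assumes m: "1 \<le> m"
  shows "dx_plus_H m Hc (Hser Hc 0) = Hser Hc m"
proof (intro ext)
  fix n x
  have "(\<Sum>i\<in>{n..-1}. Hc m (nat (-i)) x * Hser Hc 0 (n - i) x)
      = (\<Sum>i\<in>{n..-1}. if i = n then Hc m (nat (-n)) x else 0)"
    by (intro sum.cong) (auto simp: Hser_def)
  moreover have "lD (Hser Hc 0) n = (\<lambda>x. 0)" unfolding lD_def Hser_def by simp
  ultimately show "dx_plus_H m Hc (Hser Hc 0) n x = Hser Hc m n x"
    unfolding dx_plus_H_def ladd_def lmul_Hser_left[OF m deg_le_Hser] using m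
    by (simp add: Hser_def)
qed

lemma FdB_coeff_Hpoly:
  assumes m: "1 \<le> m" and curve: "integral_curve m Hc" and F: "FdB m Hc F"
  shows "F (int j) n \<in> Hpoly Hc"
proof (induction j arbitrary: n rule: nat_residue_class_induct[of m])
  case 1
  show ?case using m by simp
next
  case (2 a)
  then show ?case using F Hser_coeff_Hpoly unfolding FdB_def by simp
next
  case (3 j)
  have "F (int (j + m)) n = (\<lambda>x. deriv (F (int j) n) x + lmul (Hser Hc m) (F (int j)) n x)"
    using F unfolding FdB_def ladd_def lD_def by simp
  also have "\<dots> \<in> Hpoly Hc"
    using 3 Hpoly_deriv[OF m curve]
    by (intro Hpoly.add lmul_coeff_Hpoly Hser_coeff_Hpoly) auto
  finally show ?case .
qed

lemma lmul_sum_right: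
  assumes a: "deg_le a d" and S: "finite S" and G: "\<And>j. j \<in> S \<Longrightarrow> deg_le (G j) e"
  shows "lmul a (\<lambda>n x. \<Sum>j\<in>S. c j x * G j n x) n x = (\<Sum>j\<in>S. c j x * lmul a (G j) n x)"
proof -
  have "deg_le (\<lambda>n x. \<Sum>j\<in>S. c j x * G j n x) e"
    using G unfolding deg_le_def by simp
  then have "lmul a (\<lambda>n x. \<Sum>j\<in>S. c j x * G j n x) n x
      = (\<Sum>i\<in>{n-e..d}. a i x * (\<Sum>j\<in>S. c j x * G j (n-i) x))"
    by (rule lmul_eq_sum[OF a])
  also have "\<dots> = (\<Sum>i\<in>{n-e..d}. \<Sum>j\<in>S. c j x * (a i x * G j (n-i) x))"
    by (simp add: sum_distrib_left mult.left_commute)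
  also have "\<dots> = (\<Sum>j\<in>S. \<Sum>i\<in>{n-e..d}. c j x * (a i x * G j (n-i) x))"
    by (rule sum.swap)
  also have "\<dots> = (\<Sum>j\<in>S. c j x * (\<Sum>i\<in>{n-e..d}. a i x * G j (n-i) x))"
    by (simp add: sum_distrib_left)
  also have "\<dots> = (\<Sum>j\<in>S. c j x * lmul a (G j) n x)"
    using lmul_eq_sum[OF a G] by simp
  finally show ?thesis .
qed

lemma dx_plus_H_lincomb:
  assumes S: "finite S" and G: "\<And>j. j \<in> S \<Longrightarrow> deg_le (G j) e"
    and dc: "\<And>j x. j \<in> S \<Longrightarrow> (c j has_real_derivative deriv (c j) x) (at x)"
    and dG: "\<And>j n x. j \<in> S \<Longrightarrow> (G j n has_real_derivative deriv (G j n) x) (at x)"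
  shows "dx_plus_H m Hc (\<lambda>n x. \<Sum>j\<in>S. c j x * G j n x) n x
    = (\<Sum>j\<in>S. deriv (c j) x * G j n x + c j x * dx_plus_H m Hc (G j) n x)"
proof -
  have "((\<lambda>x. \<Sum>j\<in>S. c j x * G j n x) has_real_derivative
      (\<Sum>j\<in>S. deriv (c j) x * G j n x + c j x * deriv (G j n) x)) (at x)"
    using dc dG by (intro DERIV_sum) (auto intro!: derivative_eq_intros)
  then have "deriv (\<lambda>x. \<Sum>j\<in>S. c j x * G j n x) x
      = (\<Sum>j\<in>S. deriv (c j) x * G j n x + c j x * deriv (G j n) x)"
    by (rule DERIV_imp_deriv)
  moreover have "lmul (Hser Hc m) (\<lambda>n x. \<Sum>j\<in>S. c j x * G j n x) n x
      = (\<Sum>j\<in>S. c j x * lmul (Hser Hc m) (G j) n x)"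
    by (rule lmul_sum_right[OF deg_le_Hser S G])
  ultimately show ?thesis
    unfolding dx_plus_H_def ladd_def lD_def by (simp add: sum.distrib distrib_left)
qed

lemma dx_plus_H_plus_span:
  assumes m: "1 \<le> m" and curve: "integral_curve m Hc" and F: "FdB m Hc F"
    and g: "g \<in> plus_span (Hpoly Hc) F"
  shows "dx_plus_H m Hc g \<in> plus_span (Hpoly Hc) F"
proof -
  obtain c N where c: "\<forall>j. c j \<in> Hpoly Hc" and g: "g = (\<lambda>n x. \<Sum>j\<in>{0..N}. c j x * F j n x)"
    using g by (rule plus_spanE)
  have monic: "monic_basis F" by (rule FdB_monic_basis[OF m F])
  have deg: "deg_le (F j) N" if "j \<in> {0..N}" for j
    using monic that deg_le_mono unfolding monic_basis_def by auto
  have dF: "(F j n has_real_derivative deriv (F j n) x) (at x)" if "j \<in> {0..N}" for j n x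
    using Hpoly_deriv[OF m curve FdB_coeff_Hpoly[OF m curve F, of "nat j" n]] that by simp
  have dc: "(c j has_real_derivative deriv (c j) x) (at x)" for j x
    using Hpoly_deriv[OF m curve] c by blast
  have rec: "dx_plus_H m Hc (F j) = F (j + int m)" for j
    using F unfolding FdB_def dx_plus_H_def by simp
  have "dx_plus_H m Hc g n x = (\<Sum>j\<in>{0..N}. deriv (c j) x * F j n x + c j x * F (j + int m) n x)"
    for n x
    unfolding g rec[symmetric] by (rule dx_plus_H_lincomb[OF _ deg dc dF]) simp_all
  then have "dx_plus_H m Hc g = (\<lambda>n x. (\<Sum>j\<in>{0..N}. deriv (c j) x * F j n x)
      + (\<Sum>j\<in>{0..N}. c j x * F (j + int m) n x))"
    by (simp add: sum.distrib fun_eq_iff)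
  also have "\<dots> \<in> plus_span (Hpoly Hc) F"
  proof (rule plus_span_add[OF fun_subalgebra_Hpoly])
    show "(\<lambda>n x. \<Sum>j\<in>{0..N}. deriv (c j) x * F j n x) \<in> plus_span (Hpoly Hc) F"
      using Hpoly_deriv[OF m curve] c by (intro plus_spanI) blast
    show "(\<lambda>n x. \<Sum>j\<in>{0..N}. c j x * F (j + int m) n x) \<in> plus_span (Hpoly Hc) F"
      using c
      by (intro plus_span_sum[OF fun_subalgebra_Hpoly] plus_span_scale[OF fun_subalgebra_Hpoly]
          plus_span_basis[OF fun_subalgebra_Hpoly]) auto
  qed
  finally show ?thesis .
qed

lemma Hser_mem_plus_span:
  assumes m: "1 \<le> m" and curve: "integral_curve m Hc" and F: "FdB m Hc F"
  shows "Hser Hc k \<in> plus_span (Hpoly Hc) F"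
proof (induction k rule: less_induct)
  case (less k)
  note C = fun_subalgebra_Hpoly
  consider "k < m" | "k = m" | "m < k" by linarith
  then show ?case
  proof cases
    case 1
    then have "Hser Hc k = F (int k)" using F unfolding FdB_def by simp
    then show ?thesis using plus_span_basis[OF C] by simp
  next
    case 2
    have "Hser Hc 0 \<in> plus_span (Hpoly Hc) F" using less m 2 by simp
    then have "dx_plus_H m Hc (Hser Hc 0) \<in> plus_span (Hpoly Hc) F"
      by (rule dx_plus_H_plus_span[OF m curve F])
    then show ?thesis using dx_plus_H_Hser_0[OF m] 2 by simp
  next
    case 3
    define i where "i = k - m"
    have i: "1 \<le> i" "i < k" "k = m + i" using 3 m unfolding i_def by auto
    have "dx_plus_H m Hc (Hser Hc i) \<in> plus_span (Hpoly Hc) F"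
      by (rule dx_plus_H_plus_span[OF m curve F less[OF i(2)]])
    moreover have "(\<lambda>n x. \<Sum>l\<in>{1..i}. Hc m l x * Hser Hc (i - l) n x) \<in> plus_span (Hpoly Hc) F"
      using m i by (intro plus_span_sum[OF C] plus_span_scale[OF C] Hpoly.coeff less) auto
    moreover have "(\<lambda>n x. \<Sum>l\<in>{1..m}. Hc i l x * Hser Hc (m - l) n x) \<in> plus_span (Hpoly Hc) F"
      using m i by (intro plus_span_sum[OF C] plus_span_scale[OF C] Hpoly.coeff less) auto
    ultimately have "(\<lambda>n x. dx_plus_H m Hc (Hser Hc i) n x
        - (\<Sum>l\<in>{1..i}. Hc m l x * Hser Hc (i - l) n x)
        - (\<Sum>l\<in>{1..m}. Hc i l x * Hser Hc (m - l) n x)) \<in> plus_span (Hpoly Hc) F"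
      by (intro plus_span_diff[OF C])
    then show ?thesis unfolding dx_plus_H_Hser[OF m curve i(1)] i(3) by simp
  qed
qed

lemma Hplus_Hser:
  assumes m: "1 \<le> m" and curve: "integral_curve m Hc" and F: "FdB m Hc F"
  shows "Hplus F (Hser Hc k)"
  using Hser_mem_plus_span[OF assms] plus_span_mono[of "Hpoly Hc" UNIV F] unfolding Hplus_iff_plus_span by blast

lemma piplus_zpow:
  assumes m: "1 \<le> m" and curve: "integral_curve m Hc" and F: "FdB m Hc F"
  shows "piplus F (zpow (int j)) = Hser Hc j"
  by (rule piplus_eqI[OF FdB_monic_basis[OF m F] laurent_zpow Hplus_Hser[OF assms]])
    (auto simp: Hser_nonneg zpow_def)

lemma csrhs_eq_piminus:
  assumes m: "1 \<le> m" and curve: "integral_curve m Hc" and F: "FdB m Hc F"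
    and a: "1 \<le> a" and j: "1 \<le> j"
  shows "csrhs Hc j a = lneg (piminus F (lmul (Hser Hc a) (Hser Hc j)))"
proof -
  let ?f = "lmul (Hser Hc a) (Hser Hc j)"
  define g where "g n x = Hser Hc (j + a) n x + (\<Sum>l\<in>{1..a}. Hc j l x * Hser Hc (a - l) n x)
      + (\<Sum>l\<in>{1..j}. Hc a l x * Hser Hc (j - l) n x)" for n x
  have f_g: "?f n x = g n x - csrhs Hc j a n x" for n x
    unfolding g_def csrhs_def ladd_def lsub_def
    by (simp add: lmul_commute[OF laurent_Hser laurent_Hser, of Hc a Hc j])
  note C = fun_subalgebra_Hpoly
  have "g \<in> plus_span (Hpoly Hc) F"
    unfolding g_def[abs_def] using a j
    by (intro plus_span_add[OF C] plus_span_sum[OF C] plus_span_scale[OF C] Hpoly.coeff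
        Hser_mem_plus_span[OF m curve F]) auto
  then have "Hplus F g" unfolding Hplus_iff_plus_span using plus_span_mono[of "Hpoly Hc" UNIV F] by blast
  moreover have "\<forall>n\<ge>0. g n = ?f n" using csrhs_nonneg[OF j a] f_g by (simp add: fun_eq_iff)
  moreover have "laurent ?f"
    using deg_le_lmul[OF deg_le_Hser deg_le_Hser] laurent_iff_deg_le by blast
  ultimately have "piplus F ?f = g" by (intro piplus_eqI[OF FdB_monic_basis[OF m F]])
  then show ?thesis unfolding piminus_def lneg_def lsub_def by (simp add: f_g)
qed

theorem mainTheorem10:
  fixes m :: nat and Hc :: "nat \<Rightarrow> nat \<Rightarrow> real \<Rightarrow> real"
  assumes "1 \<le> m"
    and "integral_curve m Hc"
  shows "(\<exists>!F. FdB m Hc F) \<and>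
    (\<forall>F. FdB m Hc F \<longrightarrow>
       (\<forall>f. laurent f \<longrightarrow> (\<exists>!g. Hplus F g \<and> Hminus F (lsub f g))) \<and>
       (\<forall>j::nat. Hser Hc j = piplus F (zpow (int j))) \<and>
       (\<forall>a j::nat. 1 \<le> a \<longrightarrow> a \<le> m \<longrightarrow> 1 \<le> j \<longrightarrow>
          csrhs Hc j a = lneg (piminus F (lmul (Hser Hc a) (piplus F (zpow (int j)))))))"
proof (intro conjI allI impI)
  show "\<exists>!F. FdB m Hc F" by (rule FdB_ex1[OF assms(1)])
next
  fix F f assume "FdB m Hc F" "laurent f"
  then show "\<exists>!g. Hplus F g \<and> Hminus F (lsub f g)"
    using decomposition_ex1 FdB_monic_basis[OF assms(1)] by blast
next
  fix F and j :: nat assume "FdB m Hc F"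
  then show "Hser Hc j = piplus F (zpow (int j))" using piplus_zpow[OF assms] by simp
next
  fix F and a j :: nat assume "FdB m Hc F" "1 \<le> a" "1 \<le> j"
  then show "csrhs Hc j a = lneg (piminus F (lmul (Hser Hc a) (piplus F (zpow (int j)))))"
    using piplus_zpow[OF assms] csrhs_eq_piminus[OF assms] by simp
qed

end
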